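(* Assume $\gamma$-separability. Fix $h\in\{2,\dots,H+1\}$ and let $\nu$ be a distribution on $\mathcal{S}_{h-1}\times\mathcal{A}$ with $\nu(s,a)\ge\tau$ for all $(s,a)\in\mathcal{S}_{h-1}\times\mathcal{A}$, where $\tau>0$. Then for any distinct $s_1',s_2'\in\mathcal{S}_h$ (each reachable from some pair in $\mathcal{S}_{h-1}\times\mathcal{A}$), $$\|\mathbf{b}_\nu(s_1')-\mathbf{b}_\nu(s_2')\|_1\ge\frac{\tau\gamma}{2}.$$
   Context: In a block MDP with finite latent levels $\mathcal{S}_1,\dots,\mathcal{S}_{H+1}$, finite action set $\mathcal{A}$ with $|\mathcal{A}|=K$, $|\mathcal{S}_h|\le M$, and transition kernel $p(s'\mid s,a)$ (with $p(\cdot\mid s,a)$ supported on $\mathcal{S}_{h}$ for $s\in\mathcal{S}_{h-1}$): for a distribution $\nu$ on $\mathcal{S}_{h-1}\times\mathcal{A}$ and $s'\in\mathcal{S}_h$, $b_\nu(s,a\mid s')=\frac{p(s'\mid s,a)\nu(s,a)}{\sum_{\tilde s,\tilde a}p(s'\mid\tilde s,\tilde a)\nu(\tilde s,\tilde a)}$, and $\mathbf{b}_\nu(s')\in\mathbb{R}^{MK}$ is the vector of these values indexed by $(s,a)\in\mathcal{S}_{h-1}\times\mathcal{A}$, zero-padded. $\gamma$-separability: there is $\gamma>0$ such that for every $h\in\{2,\dots,H+1\}$ and distinct $s',s''\in\mathcal{S}_h$, $\|\mathbf{b}_U(s')-\mathbf{b}_U(s'')\|_1\ge\gamma$, where $U$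 is the uniform distribution on $\mathcal{S}_{h-1}\times\mathcal{A}$. *)

theory Defs
  imports Complex_Main
begin

definition block_mdp ::
  "(nat \<Rightarrow> 's set) \<Rightarrow> 'a set \<Rightarrow> ('s \<Rightarrow> 'a \<Rightarrow> 's \<Rightarrow> real) \<Rightarrow> nat \<Rightarrow> nat \<Rightarrow> nat \<Rightarrow> bool" where
  "block_mdp S A p H M K \<longleftrightarrow>
     finite A \<and> card A = K \<and>
     (\<forall>h\<in>{1..H+1}. finite (S h) \<and> card (S h) \<le> M) \<and>
     (\<forall>h\<in>{2..H+1}. \<forall>s\<in>S (h-1). \<forall>a\<in>A.
        (\<forall>s'. 0 \<le> p s a s') \<and> (\<forall>s'. s' \<notin> S h \<longrightarrow> p s a s' = 0) \<and>
        (\<Sum>s'\<in>S h. p s a s') = 1)"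

definition is_dist_on :: "('s \<times> 'a) set \<Rightarrow> ('s \<times> 'a \<Rightarrow> real) \<Rightarrow> bool" where
  "is_dist_on X \<nu> \<longleftrightarrow> (\<forall>x\<in>X. 0 \<le> \<nu> x) \<and> (\<Sum>x\<in>X. \<nu> x) = 1"

definition unif_dist :: "('s \<times> 'a) set \<Rightarrow> ('s \<times> 'a \<Rightarrow> real)" where
  "unif_dist X = (\<lambda>_. 1 / real (card X))"

text \<open>Backward (posterior) probability b_nu(s,a | s') for s' in S h, indexed by (s,a) in S (h-1) \<times> A.\<close>
definition bvec ::
  "(nat \<Rightarrow> 's set) \<Rightarrow> 'a set \<Rightarrow> ('s \<Rightarrow> 'a \<Rightarrow> 's \<Rightarrow> real) \<Rightarrow> nat \<Rightarrow> ('s \<times> 'a \<Rightarrow> real)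
     \<Rightarrow> 's \<Rightarrow> ('s \<times> 'a \<Rightarrow> real)" where
  "bvec S A p h \<nu> s' = (\<lambda>(s, a). p s a s' * \<nu> (s, a) /
      (\<Sum>(t, b)\<in>S (h - 1) \<times> A. p t b s' * \<nu> (t, b)))"

text \<open>L1 distance of two vectors indexed by a finite set (zero padding does not change it).\<close>
definition l1_dist :: "'i set \<Rightarrow> ('i \<Rightarrow> real) \<Rightarrow> ('i \<Rightarrow> real) \<Rightarrow> real" where
  "l1_dist X f g = (\<Sum>x\<in>X. \<bar>f x - g x\<bar>)"

definition reachable ::
  "(nat \<Rightarrow> 's set) \<Rightarrow> 'a set \<Rightarrow> ('s \<Rightarrow> 'a \<Rightarrow> 's \<Rightarrow> real) \<Rightarrow> nat \<Rightarrow> 's \<Rightarrow> bool" where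
  "reachable S A p h s' \<longleftrightarrow> (\<exists>s\<in>S (h - 1). \<exists>a\<in>A. p s a s' > 0)"

text \<open>gamma-separability (for reachable latent states, where b_U is well defined).\<close>
definition separable ::
  "(nat \<Rightarrow> 's set) \<Rightarrow> 'a set \<Rightarrow> ('s \<Rightarrow> 'a \<Rightarrow> 's \<Rightarrow> real) \<Rightarrow> nat \<Rightarrow> real \<Rightarrow> bool" where
  "separable S A p H \<gamma> \<longleftrightarrow> \<gamma> > 0 \<and>
     (\<forall>h\<in>{2..H+1}. \<forall>s'\<in>S h. \<forall>s''\<in>S h.
        s' \<noteq> s'' \<and> reachable S A p h s' \<and> reachable S A p h s'' \<longrightarrow>
        l1_dist (S (h - 1) \<times> A)
          (bvec S A p h (unif_dist (S (h - 1) \<times> A)) s')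
          (bvec S A p h (unif_dist (S (h - 1) \<times> A)) s'') \<ge> \<gamma>)"

end

theory Submission
  imports Defs
begin

text \<open>Both \<open>b\<^sub>U(s')\<close> and \<open>b\<^sub>\<nu>(s')\<close> are normalisations of a row of the kernel, the second one
  after reweighting by \<open>\<nu>\<close>. Dividing \<open>b\<^sub>\<nu>(s')\<close> pointwise by \<open>\<nu>\<close> undoes the reweighting up to a
  scalar; as \<open>\<tau> \<le> \<nu> \<le> 1\<close>, this increases L1 distances by at most a factor \<open>1/\<tau>\<close> and yields
  vectors of total mass at least 1. Normalising nonnegative vectors of mass at least 1 at most
  doubles their L1 distance, so \<open>\<gamma> \<le> \<parallel>b\<^sub>U(s\<^sub>1') - b\<^sub>U(s\<^sub>2')\<parallel>\<^sub>1 \<le> (2/\<tau>) \<parallel>b\<^sub>\<nu>(s\<^sub>1') - b\<^sub>\<nu>(s\<^sub>2')\<parallel>\<^sub>1\<close>.\<close>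

definition normalized_on :: "'i set \<Rightarrow> ('i \<Rightarrow> real) \<Rightarrow> 'i \<Rightarrow> real" where
  "normalized_on X f = (\<lambda>x. f x / sum f X)"

lemma normalized_on_mult_const:
  assumes "c \<noteq> 0"
  shows "normalized_on X (\<lambda>x. f x * c) = normalized_on X f"
  using assms by (simp add: normalized_on_def fun_eq_iff flip: sum_distrib_right)

lemma bvec_eq_normalized_on:
  "bvec S A p h \<nu> s' = normalized_on (S (h - 1) \<times> A) (\<lambda>x. p (fst x) (snd x) s' * \<nu> x)"
  by (simp add: bvec_def normalized_on_def fun_eq_iff split_beta)

lemma sum_mult_pos:
  fixes q w :: "'i \<Rightarrow> real"
  assumes "\<forall>x\<in>X. 0 \<le> q x" "sum q X > 0" "\<forall>x\<in>X. 0 < w x"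
  shows "(\<Sum>x\<in>X. q x * w x) > 0"
proof -
  have "finite X" using assms(2) by (metis less_irrefl sum.infinite)
  have "\<not> (\<forall>x\<in>X. q x \<le> 0)" using sum_nonpos[of X q] assms(2) by force
  then obtain x where x: "x \<in> X" "q x > 0" by (auto simp: not_le)
  have "q x * w x \<le> (\<Sum>x\<in>X. q x * w x)"
    by (rule member_le_sum) (use x assms(1,3) \<open>finite X\<close> in \<open>auto intro: less_imp_le\<close>)
  moreover have "q x * w x > 0" using x assms(3) by simp
  ultimately show ?thesis by linarith
qed

lemma l1_dist_normalized_on_le:
  fixes u v :: "'i \<Rightarrow> real"
  assumes "\<forall>x\<in>X. 0 \<le> u x" "\<forall>x\<in>X. 0 \<le> v x" "sum u X > 0" "sum v X > 0"
  shows "l1_dist X (normalized_on X u) (normalized_on X v) \<le> 2 * l1_dist X u v / sum u X"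
proof -
  define U V where "U = sum u X" and "V = sum v X"
  have U: "U > 0" and V: "V > 0" using assms by (auto simp: U_def V_def)
  have pointwise: "\<bar>u x / U - v x / V\<bar> \<le> \<bar>u x - v x\<bar> / U + v x * \<bar>1/U - 1/V\<bar>" if "x \<in> X" for x
  proof -
    have "u x / U - v x / V = (u x - v x) / U + v x * (1/U - 1/V)"
      using U V by (simp add: field_simps)
    also have "\<bar>\<dots>\<bar> \<le> \<bar>(u x - v x) / U\<bar> + \<bar>v x * (1/U - 1/V)\<bar>" by (rule abs_triangle_ineq)
    finally show ?thesis using U assms(2) that by (simp add: abs_mult)
  qed
  have mass_gap: "V * \<bar>1/U - 1/V\<bar> = \<bar>V - U\<bar> / U"
    using U V by (simp add: field_simps abs_mult abs_divide)
  have "\<bar>V - U\<bar> = \<bar>\<Sum>x\<in>X. u x - v x\<bar>"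
    by (simp add: U_def V_def sum_subtractf abs_minus_commute)
  also have "\<dots> \<le> l1_dist X u v" unfolding l1_dist_def by (rule sum_abs)
  finally have "\<bar>V - U\<bar> \<le> l1_dist X u v" .
  have "l1_dist X (normalized_on X u) (normalized_on X v)
      \<le> (\<Sum>x\<in>X. \<bar>u x - v x\<bar> / U + v x * \<bar>1/U - 1/V\<bar>)"
    unfolding l1_dist_def normalized_on_def U_def[symmetric] V_def[symmetric]
    by (rule sum_mono) (rule pointwise)
  also have "\<dots> = l1_dist X u v / U + V * \<bar>1/U - 1/V\<bar>"
    by (simp add: l1_dist_def sum.distrib sum_divide_distrib sum_distrib_right V_def)
  also have "\<dots> \<le> 2 * l1_dist X u v / U"
    unfolding mass_gap using \<open>\<bar>V - U\<bar> \<le> l1_dist X u v\<close> U by (simp add: divide_simps)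
  finally show ?thesis by (simp add: U_def)
qed

lemma l1_dist_mult_ge:
  fixes f g w :: "'i \<Rightarrow> real"
  assumes "\<forall>x\<in>X. \<tau> \<le> w x" "0 \<le> \<tau>"
  shows "\<tau> * l1_dist X f g \<le> l1_dist X (\<lambda>x. w x * f x) (\<lambda>x. w x * g x)"
  unfolding l1_dist_def sum_distrib_left
proof (rule sum_mono)
  fix x assume "x \<in> X"
  hence w_x: "\<tau> \<le> w x" "0 \<le> w x" using assms by auto
  hence "\<tau> * \<bar>f x - g x\<bar> \<le> w x * \<bar>f x - g x\<bar>" by (simp add: mult_right_mono)
  also have "\<dots> = \<bar>w x * f x - w x * g x\<bar>"
    using w_x by (simp add: abs_mult right_diff_distrib[symmetric])
  finally show "\<tau> * \<bar>f x - g x\<bar> \<le> \<bar>w x * f x - w x * g x\<bar>" .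
qed

lemma l1_dist_normalized_on_reweight:
  fixes q1 q2 w :: "'i \<Rightarrow> real"
  assumes nonneg: "\<forall>x\<in>X. 0 \<le> q1 x" "\<forall>x\<in>X. 0 \<le> q2 x"
    and pos: "sum q1 X > 0" "sum q2 X > 0"
    and w: "\<forall>x\<in>X. \<tau> \<le> w x \<and> w x \<le> 1" and "\<tau> > 0"
  shows "l1_dist X (normalized_on X q1) (normalized_on X q2)
    \<le> 2 / \<tau> * l1_dist X (normalized_on X (\<lambda>x. q1 x * w x)) (normalized_on X (\<lambda>x. q2 x * w x))"
proof -
  define Z1 Z2 where "Z1 = (\<Sum>x\<in>X. q1 x * w x)" and "Z2 = (\<Sum>x\<in>X. q2 x * w x)"
  define u v where "u x = q1 x / Z1" and "v x = q2 x / Z2" for x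
  have l1_dist_nonneg: "0 \<le> l1_dist X u v" by (simp add: l1_dist_def sum_nonneg)
  have "\<forall>x\<in>X. 0 < w x" using w \<open>\<tau> > 0\<close> by force
  hence Z1: "Z1 > 0" and Z2: "Z2 > 0"
    unfolding Z1_def Z2_def using sum_mult_pos nonneg pos by blast+
  have u_norm: "normalized_on X u = normalized_on X q1"
    using normalized_on_mult_const[of "1/Z1" X q1] Z1 by (simp add: u_def[abs_def])
  have v_norm: "normalized_on X v = normalized_on X q2"
    using normalized_on_mult_const[of "1/Z2" X q2] Z2 by (simp add: v_def[abs_def])
  have reweighted: "normalized_on X (\<lambda>x. q1 x * w x) = (\<lambda>x. w x * u x)"
    "normalized_on X (\<lambda>x. q2 x * w x) = (\<lambda>x. w x * v x)"
    by (simp_all add: normalized_on_def fun_eq_iff u_def v_def Z1_def Z2_def)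
  have "1 = (\<Sum>x\<in>X. q1 x * w x / Z1)" using Z1 by (simp add: Z1_def flip: sum_divide_distrib)
  also have "\<dots> \<le> sum u X"
    unfolding u_def using nonneg w Z1
    by (intro sum_mono divide_right_mono) (auto simp: mult_left_le)
  finally have u_mass: "1 \<le> sum u X" .
  have "l1_dist X (normalized_on X q1) (normalized_on X q2) \<le> 2 * l1_dist X u v / sum u X"
    unfolding u_norm[symmetric] v_norm[symmetric]
  proof (rule l1_dist_normalized_on_le)
    show "\<forall>x\<in>X. 0 \<le> u x" "\<forall>x\<in>X. 0 \<le> v x"
      using nonneg Z1 Z2 by (simp_all add: u_def v_def)
    show "sum u X > 0" using u_mass by linarith
    show "sum v X > 0" using pos(2) Z2 by (simp add: v_def flip: sum_divide_distrib)
  qed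
  also have "\<dots> \<le> 2 * l1_dist X u v"
    using u_mass l1_dist_nonneg by (simp add: divide_le_eq mult_le_cancel_left1)
  also have "\<dots> \<le> 2 / \<tau> * l1_dist X (\<lambda>x. w x * u x) (\<lambda>x. w x * v x)"
    using l1_dist_mult_ge[of X \<tau> w u v] w \<open>\<tau> > 0\<close> by (simp add: field_simps)
  finally show ?thesis unfolding reweighted .
qed

lemma is_dist_on_le_one:
  assumes "is_dist_on X \<nu>" "x \<in> X"
  shows "\<nu> x \<le> 1"
proof -
  have "finite X" using assms by (metis is_dist_on_def sum.infinite zero_neq_one)
  hence "\<nu> x \<le> sum \<nu> X" using assms by (intro member_le_sum) (auto simp: is_dist_on_def)
  thus ?thesis using assms(1) by (simp add: is_dist_on_def)
qed

lemma reachable_sum_pos: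
  assumes "block_mdp S A p H M K" "h \<in> {2..H+1}" "reachable S A p h s'"
  shows "(\<Sum>x\<in>S (h - 1) \<times> A. p (fst x) (snd x) s') > 0"
proof -
  have "h - 1 \<in> {1..H+1}" using assms(2) by auto
  hence "finite (S (h - 1) \<times> A)" using assms(1) by (auto simp: block_mdp_def)
  obtain s a where sa: "s \<in> S (h - 1)" "a \<in> A" "p s a s' > 0"
    using assms(3) by (auto simp: reachable_def)
  have "p s a s' \<le> (\<Sum>x\<in>S (h - 1) \<times> A. p (fst x) (snd x) s')"
    using member_le_sum[of "(s, a)" "S (h - 1) \<times> A" "\<lambda>x. p (fst x) (snd x) s'"]
      \<open>finite (S (h - 1) \<times> A)\<close> sa assms(1,2) by (auto simp: block_mdp_def)
  with sa show ?thesis by linarith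
qed

theorem lemma6:
  fixes S :: "nat \<Rightarrow> 's set" and A :: "'a set" and p :: "'s \<Rightarrow> 'a \<Rightarrow> 's \<Rightarrow> real"
    and H M K h :: nat and \<gamma> \<tau> :: real and \<nu> :: "'s \<times> 'a \<Rightarrow> real" and s1 s2 :: 's
  assumes "block_mdp S A p H M K"
    and "separable S A p H \<gamma>"
    and "h \<in> {2..H+1}"
    and "is_dist_on (S (h - 1) \<times> A) \<nu>"
    and "\<tau> > 0"
    and "\<forall>x\<in>S (h - 1) \<times> A. \<nu> x \<ge> \<tau>"
    and "s1 \<in> S h" and "s2 \<in> S h" and "s1 \<noteq> s2"
    and "reachable S A p h s1" and "reachable S A p h s2"
  shows "l1_dist (S (h - 1) \<times> A) (bvec S A p h \<nu> s1) (bvec S A p h \<nu> s2) \<ge> \<tau> * \<gamma> / 2"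
proof -
  define X where "X = S (h - 1) \<times> A"
  define row where "row s' x = p (fst x) (snd x) s'" for s' x
  have row_nonneg: "\<forall>x\<in>X. 0 \<le> row s' x" for s'
    using assms(1,3) by (auto simp: block_mdp_def X_def row_def)
  have row_pos: "sum (row s1) X > 0" "sum (row s2) X > 0"
    using reachable_sum_pos[OF assms(1,3)] assms(10,11) by (simp_all add: X_def row_def)
  hence "card X \<noteq> 0" by (metis card_0_eq less_irrefl sum.empty sum.infinite)
  hence bvec_unif: "bvec S A p h (unif_dist X) s' = normalized_on X (row s')" for s'
    using normalized_on_mult_const[of "1 / real (card X)" X "row s'"]
    by (simp add: bvec_eq_normalized_on unif_dist_def X_def row_def[abs_def])
  have bvec_\<nu>: "bvec S A p h \<nu> s' = normalized_on X (\<lambda>x. row s' x * \<nu> x)" for s'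
    by (simp add: bvec_eq_normalized_on X_def row_def)
  have \<nu>_bounds: "\<forall>x\<in>X. \<tau> \<le> \<nu> x \<and> \<nu> x \<le> 1"
    using assms(6) is_dist_on_le_one[OF assms(4)] by (simp add: X_def)
  have "\<gamma> \<le> l1_dist X (bvec S A p h (unif_dist X) s1) (bvec S A p h (unif_dist X) s2)"
    using assms(2,3,7-11) unfolding separable_def X_def by blast
  also have "\<dots> \<le> 2 / \<tau> * l1_dist X (bvec S A p h \<nu> s1) (bvec S A p h \<nu> s2)"
    unfolding bvec_unif bvec_\<nu>
    by (rule l1_dist_normalized_on_reweight[OF row_nonneg row_nonneg row_pos \<nu>_bounds assms(5)])
  finally have "\<gamma> \<le> 2 / \<tau> * l1_dist X (bvec S A p h \<nu> s1) (bvec S A p h \<nu> s2)" .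
  with assms(5) show ?thesis unfolding X_def by (simp add: field_simps)
qed

end
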